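(* Let $G$ be a Ricci-flat graph with maximum degree at most $4$. Then no edge of $G$ is contained both in a cycle of length $3$ and in a cycle of length $4$.
   Context: All graphs are simple (no loops or multiple edges), undirected, connected and locally finite; $d(x)$ is the degree of $x$ and $d(x,y)$ the graph distance. For a vertex $x$ and $\alpha\in[0,1]$ let $\mu_x^\alpha$ be the probability measure with $\mu_x^\alpha(x)=\alpha$, $\mu_x^\alpha(z)=\frac{1-\alpha}{d(x)}$ for $z\sim x$, and $0$ otherwise. The transportation distance is $W(\mu_1,\mu_2)=\inf_A\sum_{u,v}A(u,v)d(u,v)$ over all couplings $A$ of $\mu_1,\mu_2$. Set $k_\alpha(x,y)=1-W(\mu_x^\alpha,\mu_y^\alpha)/d(x,y)$ and $k(x,y)=\lim_{\alpha\to1}k_\alpha(x,y)/(1-\alpha)$ (Lin–Lu–Yau Ricci curvature). A graph is Ricci-flat if $k(x,y)=0$ for every edge $(x,y)$. An edge is contained in a cycle of length $\ell$ if some cycle subgraph of $G$ with $\ell$ vertices uses that edge. *)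

theory Defs
  imports Complex_Main
begin

text \<open>A graph is given by its adjacency relation E on the vertex type 'a (all elements
of 'a are vertices): simple (symmetric, irreflexive), locally finite, connected.\<close>

definition simple_graph :: "('a \<Rightarrow> 'a \<Rightarrow> bool) \<Rightarrow> bool" where
  "simple_graph E \<longleftrightarrow> (\<forall>x y. E x y \<longrightarrow> E y x) \<and> (\<forall>x. \<not> E x x)
     \<and> (\<forall>x. finite {y. E x y}) \<and> (\<forall>x y. E\<^sup>*\<^sup>* x y)"

definition degree :: "('a \<Rightarrow> 'a \<Rightarrow> bool) \<Rightarrow> 'a \<Rightarrow> nat" where
  "degree E x = card {y. E x y}"

definition gdist :: "('a \<Rightarrow> 'a \<Rightarrow> bool) \<Rightarrow> 'a \<Rightarrow> 'a \<Rightarrow> nat" where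
  "gdist E x y = (LEAST n. (E ^^ n) x y)"

definition mu :: "('a \<Rightarrow> 'a \<Rightarrow> bool) \<Rightarrow> real \<Rightarrow> 'a \<Rightarrow> 'a \<Rightarrow> real" where
  "mu E \<alpha> x z = (if z = x then \<alpha> else if E x z then (1 - \<alpha>) / real (degree E x) else 0)"

definition supp :: "('a \<Rightarrow> real) \<Rightarrow> 'a set" where
  "supp m = {u. m u \<noteq> 0}"

text \<open>Couplings of two finitely supported probability measures m1, m2. Any coupling is
supported on supp m1 \<times> supp m2, so we restrict to S = supp m1 \<union> supp m2.\<close>
definition coupling :: "('a \<Rightarrow> real) \<Rightarrow> ('a \<Rightarrow> real) \<Rightarrow> ('a \<Rightarrow> 'a \<Rightarrow> real) \<Rightarrow> bool" where
  "coupling m1 m2 A \<longleftrightarrow>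
     (let S = supp m1 \<union> supp m2 in
       (\<forall>u v. 0 \<le> A u v) \<and> (\<forall>u v. (u \<notin> S \<or> v \<notin> S) \<longrightarrow> A u v = 0)
       \<and> (\<forall>u\<in>S. (\<Sum>v\<in>S. A u v) = m1 u) \<and> (\<forall>v\<in>S. (\<Sum>u\<in>S. A u v) = m2 v))"

definition transport_cost :: "('a \<Rightarrow> 'a \<Rightarrow> bool) \<Rightarrow> ('a \<Rightarrow> real) \<Rightarrow> ('a \<Rightarrow> real) \<Rightarrow> ('a \<Rightarrow> 'a \<Rightarrow> real) \<Rightarrow> real" where
  "transport_cost E m1 m2 A =
     (let S = supp m1 \<union> supp m2 in (\<Sum>u\<in>S. \<Sum>v\<in>S. A u v * real (gdist E u v)))"

definition transport_dist :: "('a \<Rightarrow> 'a \<Rightarrow> bool) \<Rightarrow> ('a \<Rightarrow> real) \<Rightarrow> ('a \<Rightarrow> real) \<Rightarrow> real" where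
  "transport_dist E m1 m2 = Inf (transport_cost E m1 m2 ` {A. coupling m1 m2 A})"

definition kappa_alpha :: "('a \<Rightarrow> 'a \<Rightarrow> bool) \<Rightarrow> real \<Rightarrow> 'a \<Rightarrow> 'a \<Rightarrow> real" where
  "kappa_alpha E \<alpha> x y = 1 - transport_dist E (mu E \<alpha> x) (mu E \<alpha> y) / real (gdist E x y)"

definition ricci_flat :: "('a \<Rightarrow> 'a \<Rightarrow> bool) \<Rightarrow> bool" where
  "ricci_flat E \<longleftrightarrow> (\<forall>x y. E x y \<longrightarrow>
      ((\<lambda>\<alpha>. kappa_alpha E \<alpha> x y / (1 - \<alpha>)) \<longlongrightarrow> 0) (at_left 1))"

definition edge_in_cycle :: "('a \<Rightarrow> 'a \<Rightarrow> bool) \<Rightarrow> nat \<Rightarrow> 'a \<Rightarrow> 'a \<Rightarrow> bool" where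
  "edge_in_cycle E l x y \<longleftrightarrow> (\<exists>vs. length vs = l \<and> 3 \<le> l \<and> distinct vs
     \<and> (\<forall>i<l. E (vs ! i) (vs ! ((i + 1) mod l)))
     \<and> (\<exists>i<l. {vs ! i, vs ! ((i + 1) mod l)} = {x, y}))"

end

theory Submission
  imports Defs
begin

text \<open>Suppose the edge \<open>xy\<close> lies in a triangle \<open>xyz\<close> and in a 4-cycle \<open>xyuw\<close>.
  Transport \<open>\<mu>\<^sub>x\<^sup>\<alpha>\<close> to \<open>\<mu>\<^sub>y\<^sup>\<alpha>\<close> by leaving as much mass as possible in place at \<open>x\<close>, \<open>y\<close> and
  \<open>z\<close>, moving the surplus at \<open>x\<close> to \<open>y\<close> and some mass from \<open>w\<close> to \<open>u\<close> along an edge, and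
  shipping the rest over distance at most 3. Since all degrees are at most 4, every
  neighbour carries mass at least \<open>(1 - \<alpha>)/4\<close>, and this plan costs at most \<open>1 - (1 - \<alpha>)/4\<close>.
  Hence \<open>k(x,y) \<ge> 1/4\<close>, so the graph is not Ricci-flat. If \<open>z\<close> lies on the 4-cycle, the
  same estimate applies to another edge of the triangle, with \<open>w = u\<close>.\<close>

lemma gdist_le_relpowp: "(E ^^ n) a b \<Longrightarrow> gdist E a b \<le> n"
  unfolding gdist_def by (rule Least_le)

lemma gdist_self: "gdist E a a = 0"
  using gdist_le_relpowp[where n=0] by simp

lemma gdist_edge_le: "E a b \<Longrightarrow> gdist E a b \<le> 1"
  using gdist_le_relpowp[where n=1] by (metis relpowp_1)

lemma gdist_edge: assumes "E a b" "a \<noteq> b" shows "gdist E a b = 1"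
proof -
  have "(E ^^ gdist E a b) a b"
    unfolding gdist_def by (rule LeastI[of _ 1]) (metis relpowp_1 assms(1))
  then have "gdist E a b \<noteq> 0" using assms(2) by (metis relpowp_0_E)
  then show ?thesis using gdist_edge_le[where E=E, OF assms(1)] by simp
qed

lemma gdist_le_3_neighbourhood:
  assumes sym: "\<And>a b. E a b \<Longrightarrow> E b a" and "E x y"
    and p: "E x p \<or> E y p" and q: "E x q \<or> E y q"
  shows "gdist E p q \<le> 3"
proof -
  have path2: "(E ^^ 2) a c" if "E a b" "E b c" for a b c
    using that by (metis numeral_2_eq_2 relpowp_Suc_I relpowp_Suc_0)
  have path3: "(E ^^ 3) a d" if "E a b" "E b c" "E c d" for a b c d
    using that path2 by (metis numeral_3_eq_3 numeral_2_eq_2 relpowp_Suc_I relpowp_Suc_0)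
  have "(E ^^ 2) p q \<or> (E ^^ 3) p q"
    using p q path2 path3 sym \<open>E x y\<close> by blast
  then show ?thesis
    using gdist_le_relpowp[where n=2] gdist_le_relpowp[where n=3] by force
qed

lemma transport_dist_le_cost:
  assumes "coupling m1 m2 A"
  shows "transport_dist E m1 m2 \<le> transport_cost E m1 m2 A"
  unfolding transport_dist_def
proof (rule cInf_lower)
  show "transport_cost E m1 m2 A \<in> transport_cost E m1 m2 ` {A. coupling m1 m2 A}"
    using assms by auto
  show "bdd_below (transport_cost E m1 m2 ` {A. coupling m1 m2 A})"
    by (rule bdd_belowI[of _ 0])
      (auto simp: transport_cost_def coupling_def Let_def intro!: sum_nonneg)
qed

text \<open>If the total mass is \<open>0\<close>, then \<open>r1\<close> vanishes on \<open>S\<close>, so the division by zero is harmless.\<close>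

lemma sum_product_div_sum:
  fixes r1 r2 :: "'a \<Rightarrow> real"
  assumes "finite S" "p \<in> S" "\<forall>p\<in>S. 0 \<le> r1 p" "sum r1 S = sum r2 S"
  shows "(\<Sum>q\<in>S. r1 p * r2 q / sum r1 S) = r1 p"
proof (cases "sum r1 S = 0")
  case True
  then have "r1 p = 0" using assms sum_nonneg_eq_0_iff by blast
  then show ?thesis by simp
next
  case False
  then show ?thesis
    using assms(4) by (simp add: sum_divide_distrib[symmetric] sum_distrib_left[symmetric])
qed

text \<open>The partial plan \<open>D\<close> is completed to a coupling by the normalized product of the two
  residual measures.\<close>

lemma transport_dist_le_partial_plan:
  fixes m1 m2 :: "'a \<Rightarrow> real" and D :: "'a \<Rightarrow> 'a \<Rightarrow> real" and K :: real
  assumes S: "S = supp m1 \<union> supp m2" and fin: "finite S"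
    and s1: "(\<Sum>p\<in>S. m1 p) = 1" and s2: "(\<Sum>p\<in>S. m2 p) = 1"
    and D_nonneg: "\<forall>p q. 0 \<le> D p q"
    and row: "\<forall>p\<in>S. (\<Sum>q\<in>S. D p q) \<le> m1 p"
    and col: "\<forall>q\<in>S. (\<Sum>p\<in>S. D p q) \<le> m2 q"
    and diam: "\<forall>p\<in>S. \<forall>q\<in>S. gdist E p q \<le> K"
  shows "transport_dist E m1 m2 \<le> (\<Sum>p\<in>S. \<Sum>q\<in>S. D p q * gdist E p q)
            + K * (1 - (\<Sum>p\<in>S. \<Sum>q\<in>S. D p q))"
proof -
  define r1 where "r1 p = m1 p - (\<Sum>q\<in>S. D p q)" for p
  define r2 where "r2 q = m2 q - (\<Sum>p\<in>S. D p q)" for q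
  define M where "M = 1 - (\<Sum>p\<in>S. \<Sum>q\<in>S. D p q)"
  define A where "A p q = (if p \<in> S \<and> q \<in> S then D p q + r1 p * r2 q / M else 0)" for p q
  have r1_nonneg: "\<forall>p\<in>S. 0 \<le> r1 p" and r2_nonneg: "\<forall>q\<in>S. 0 \<le> r2 q"
    using row col by (auto simp: r1_def r2_def)
  have sum_r1: "sum r1 S = M"
    using s1 by (simp add: r1_def M_def sum_subtractf)
  have sum_r2: "sum r2 S = M"
    using s2 sum.swap[of "\<lambda>p q. D p q" S S] by (simp add: r2_def M_def sum_subtractf)
  have row_res: "(\<Sum>q\<in>S. r1 p * r2 q / M) = r1 p" if "p \<in> S" for p
    using sum_product_div_sum[OF fin that r1_nonneg, of r2] sum_r1 sum_r2 by simp
  have col_res: "(\<Sum>p\<in>S. r1 p * r2 q / M) = r2 q" if "q \<in> S" for q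
    using sum_product_div_sum[OF fin that r2_nonneg, of r1] sum_r1 sum_r2
    by (simp add: mult.commute)
  have M_nonneg: "0 \<le> M"
    using sum_r1 r1_nonneg sum_nonneg by metis
  have "coupling m1 m2 A"
    unfolding coupling_def Let_def S[symmetric]
  proof (intro conjI allI impI ballI)
    fix u v show "0 \<le> A u v"
      using D_nonneg r1_nonneg r2_nonneg M_nonneg by (simp add: A_def)
  next
    fix u v assume "u \<notin> S \<or> v \<notin> S" then show "A u v = 0" by (auto simp: A_def)
  next
    fix u assume "u \<in> S" then show "(\<Sum>v\<in>S. A u v) = m1 u"
      using row_res by (simp add: A_def sum.distrib r1_def)
  next
    fix v assume "v \<in> S" then show "(\<Sum>u\<in>S. A u v) = m2 v"
      using col_res by (simp add: A_def sum.distrib r2_def)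
  qed
  then have "transport_dist E m1 m2 \<le> transport_cost E m1 m2 A"
    by (rule transport_dist_le_cost)
  also have "\<dots> = (\<Sum>p\<in>S. \<Sum>q\<in>S. D p q * gdist E p q)
      + (\<Sum>p\<in>S. \<Sum>q\<in>S. r1 p * r2 q / M * gdist E p q)"
    unfolding transport_cost_def Let_def S[symmetric]
    by (simp add: A_def sum.distrib distrib_right)
  also have "(\<Sum>p\<in>S. \<Sum>q\<in>S. r1 p * r2 q / M * gdist E p q) \<le> (\<Sum>p\<in>S. \<Sum>q\<in>S. r1 p * r2 q / M * K)"
    using diam r1_nonneg r2_nonneg M_nonneg by (intro sum_mono mult_left_mono) auto
  also have "\<dots> = (\<Sum>p\<in>S. K * (\<Sum>q\<in>S. r1 p * r2 q / M))"
    by (simp add: sum_distrib_left mult.commute)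
  also have "\<dots> = K * M"
    using row_res sum_r1 by (simp add: sum_distrib_left[symmetric])
  finally show ?thesis by (simp add: M_def)
qed

definition point_plan :: "real \<Rightarrow> 'a \<Rightarrow> 'a \<Rightarrow> 'a \<Rightarrow> 'a \<Rightarrow> real" where
  "point_plan c p0 q0 p q = (if p = p0 \<and> q = q0 then c else 0)"

lemma sum_point_plan_row:
  "finite S \<Longrightarrow> q0 \<in> S \<Longrightarrow> (\<Sum>q\<in>S. point_plan c p0 q0 p q) = (if p = p0 then c else 0)"
  by (simp add: point_plan_def)

lemma sum_point_plan_col:
  "finite S \<Longrightarrow> p0 \<in> S \<Longrightarrow> (\<Sum>p\<in>S. point_plan c p0 q0 p q) = (if q = q0 then c else 0)"
  by (simp add: point_plan_def)

lemma sum_point_plan_weighted: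
  assumes "finite S" "p0 \<in> S" "q0 \<in> S"
  shows "(\<Sum>p\<in>S. \<Sum>q\<in>S. point_plan c p0 q0 p q * f p q) = c * f p0 q0"
proof -
  have "(\<Sum>q\<in>S. point_plan c p0 q0 p q * f p q) = (if p = p0 then c * f p0 q0 else 0)" for p
    using assms by (simp add: point_plan_def if_distrib[of "\<lambda>c. c * _"] cong: if_cong)
  then show ?thesis using assms by simp
qed

lemma simple_graph_sym: "simple_graph E \<Longrightarrow> E a b \<Longrightarrow> E b a"
  unfolding simple_graph_def by blast

lemma simple_graph_irrefl: "simple_graph E \<Longrightarrow> \<not> E a a"
  unfolding simple_graph_def by blast

lemma simple_graph_finite_neighbours: "simple_graph E \<Longrightarrow> finite {b. E a b}"
  unfolding simple_graph_def by blast

lemma finite_neighbours_union: "simple_graph E \<Longrightarrow> finite {p. E x p \<or> E y p}"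
  using simple_graph_finite_neighbours[of E x] simple_graph_finite_neighbours[of E y]
  by (simp add: Collect_disj_eq)

lemma degree_pos: "simple_graph E \<Longrightarrow> E v t \<Longrightarrow> 0 < degree E v"
  unfolding degree_def using simple_graph_finite_neighbours[of E v] by (auto simp: card_gt_0_iff)

lemma supp_mu:
  "simple_graph E \<Longrightarrow> E v t \<Longrightarrow> 0 < \<alpha> \<Longrightarrow> \<alpha> < 1 \<Longrightarrow> supp (mu E \<alpha> v) = insert v {p. E v p}"
  using degree_pos[of E v t] unfolding supp_def mu_def by auto

lemma sum_mu:
  assumes sg: "simple_graph E" and "E v t" and "finite S" and "insert v {p. E v p} \<subseteq> S"
  shows "(\<Sum>p\<in>S. mu E \<alpha> v p) = 1"
proof -
  have "(\<Sum>p\<in>S. mu E \<alpha> v p) = (\<Sum>p\<in>insert v {p. E v p}. mu E \<alpha> v p)"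
    using assms(3,4) by (intro sum.mono_neutral_right) (auto simp: mu_def)
  also have "\<dots> = \<alpha> + (\<Sum>p\<in>{p. E v p}. mu E \<alpha> v p)"
    using simple_graph_finite_neighbours[OF sg] simple_graph_irrefl[OF sg] by (simp add: mu_def)
  also have "\<dots> = \<alpha> + (\<Sum>p\<in>{p. E v p}. (1 - \<alpha>) / degree E v)"
    using simple_graph_irrefl[OF sg] by (intro arg_cong[where f="(+) \<alpha>"] sum.cong) (auto simp: mu_def)
  also have "\<dots> = 1"
    using degree_pos[OF sg \<open>E v t\<close>] by (simp add: degree_def)
  finally show ?thesis .
qed

text \<open>For an edge \<open>xy\<close>, the supports of \<open>\<mu>\<^sub>x\<^sup>\<alpha>\<close> and \<open>\<mu>\<^sub>y\<^sup>\<alpha>\<close> together form the union of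
  the two neighbourhoods, which has diameter at most 3.\<close>

lemma transport_dist_mu_le_partial_plan:
  fixes D :: "'a \<Rightarrow> 'a \<Rightarrow> real"
  assumes sg: "simple_graph E" and xy: "E x y" and "0 < \<alpha>" "\<alpha> < 1"
    and S: "S = {p. E x p \<or> E y p}"
    and D_nonneg: "\<forall>p q. 0 \<le> D p q"
    and row: "\<forall>p\<in>S. (\<Sum>q\<in>S. D p q) \<le> mu E \<alpha> x p"
    and col: "\<forall>q\<in>S. (\<Sum>p\<in>S. D p q) \<le> mu E \<alpha> y q"
  shows "transport_dist E (mu E \<alpha> x) (mu E \<alpha> y) \<le> (\<Sum>p\<in>S. \<Sum>q\<in>S. D p q * gdist E p q)
            + 3 * (1 - (\<Sum>p\<in>S. \<Sum>q\<in>S. D p q))"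
proof (rule transport_dist_le_partial_plan[OF _ _ _ _ D_nonneg row col])
  note sym = simple_graph_sym[OF sg]
  show "S = supp (mu E \<alpha> x) \<union> supp (mu E \<alpha> y)"
    using supp_mu[OF sg xy, of \<alpha>] supp_mu[OF sg sym[OF xy], of \<alpha>] assms(3,4) S xy sym by auto
  show fin: "finite S"
    unfolding S by (rule finite_neighbours_union[OF sg])
  show "(\<Sum>p\<in>S. mu E \<alpha> x p) = 1" "(\<Sum>p\<in>S. mu E \<alpha> y p) = 1"
    using sum_mu[OF sg xy fin] sum_mu[OF sg sym[OF xy] fin] S xy sym by auto
  show "\<forall>p\<in>S. \<forall>q\<in>S. real (gdist E p q) \<le> 3"
    using gdist_le_3_neighbourhood[where E=E, OF sym xy] S by fastforce
qed

lemma transport_dist_mu_triangle_bridge: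
  assumes sg: "simple_graph E"
    and xy: "E x y" and xz: "E x z" and yz: "E y z" and xw: "E x w" and yu: "E y u"
    and "w \<noteq> y" "w \<noteq> z" "u \<noteq> x" "u \<noteq> z" and wu: "w = u \<or> E w u"
    and \<alpha>: "1/2 \<le> \<alpha>" "\<alpha> < 1"
  defines "a \<equiv> (1 - \<alpha>) / degree E x" and "b \<equiv> (1 - \<alpha>) / degree E y"
  shows "transport_dist E (mu E \<alpha> x) (mu E \<alpha> y) \<le> 3 - 2 * \<alpha> - 8 * min a b - max a b"
proof -
  note sym = simple_graph_sym[OF sg] and irrefl = simple_graph_irrefl[OF sg]
  define mn where "mn = min a b"
  define mx where "mx = max a b"
  have "0 \<le> a" "a \<le> 1 - \<alpha>" "0 \<le> b" "b \<le> 1 - \<alpha>"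
    using degree_pos[OF sg xy] degree_pos[OF sg yz] \<alpha> by (simp_all add: a_def b_def divide_le_eq)
  then have ab: "0 \<le> mn" "mn \<le> a" "mn \<le> b" "mx \<le> \<alpha>" "mn + mx = a + b"
    using \<alpha> by (auto simp: mn_def mx_def)
  have mu_x: "mu E \<alpha> x p = (if p = x then \<alpha> else if E x p then a else 0)"
   and mu_y: "mu E \<alpha> y p = (if p = y then \<alpha> else if E y p then b else 0)" for p
    by (simp_all add: mu_def a_def b_def)
  define S where "S = {p. E x p \<or> E y p}"
  have fin: "finite S"
    unfolding S_def by (rule finite_neighbours_union[OF sg])
  have in_S: "x \<in> S" "y \<in> S" "z \<in> S" "w \<in> S" "u \<in> S"
    using xy xz xw yu sym by (auto simp: S_def)
  have "x \<noteq> y" "x \<noteq> z" "y \<noteq> z" "x \<noteq> w" "y \<noteq> u"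
    using irrefl xy xz yz xw yu by auto
  have gdist_xy: "real (gdist E x y) = 1"
    using gdist_edge[where E=E, OF xy \<open>x \<noteq> y\<close>] by simp
  define D where "D p q = point_plan b x x p q + point_plan a y y p q + point_plan mn z z p q
      + point_plan (\<alpha> - mx) x y p q + point_plan mn w u p q" for p q
  have "\<forall>p q. 0 \<le> D p q"
    using ab \<open>0 \<le> a\<close> \<open>0 \<le> b\<close> by (auto simp: D_def point_plan_def)
  moreover have "\<forall>p\<in>S. (\<Sum>q\<in>S. D p q) \<le> mu E \<alpha> x p"
    using assms ab \<open>x \<noteq> y\<close> \<open>x \<noteq> z\<close> \<open>x \<noteq> w\<close> \<open>y \<noteq> z\<close>
    by (auto simp: D_def sum.distrib sum_point_plan_row fin in_S mu_x mx_def)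
  moreover have "\<forall>q\<in>S. (\<Sum>p\<in>S. D p q) \<le> mu E \<alpha> y q"
    using assms ab sym \<open>x \<noteq> y\<close> \<open>y \<noteq> z\<close> \<open>y \<noteq> u\<close> \<open>x \<noteq> z\<close>
    by (auto simp: D_def sum.distrib sum_point_plan_col fin in_S mu_y mx_def)
  ultimately have W: "transport_dist E (mu E \<alpha> x) (mu E \<alpha> y) \<le>
      (\<Sum>p\<in>S. \<Sum>q\<in>S. D p q * gdist E p q) + 3 * (1 - (\<Sum>p\<in>S. \<Sum>q\<in>S. D p q))"
    using \<alpha> by (intro transport_dist_mu_le_partial_plan[OF sg xy _ _ S_def]) auto
  have "(\<Sum>p\<in>S. \<Sum>q\<in>S. D p q) = b + a + mn + (\<alpha> - mx) + mn"
    using sum_point_plan_weighted[OF fin, where f="\<lambda>_ _. 1"] in_S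
    by (simp add: D_def sum.distrib)
  moreover have "(\<Sum>p\<in>S. \<Sum>q\<in>S. D p q * gdist E p q) = (\<alpha> - mx) + mn * gdist E w u"
    using in_S
    by (simp add: D_def sum.distrib distrib_right sum_point_plan_weighted fin gdist_self gdist_xy)
  moreover have "mn * gdist E w u \<le> mn"
    using wu gdist_edge_le[of E w u] gdist_self[of E u] ab by (auto intro: mult_left_le)
  ultimately show ?thesis
    using W ab unfolding mn_def[symmetric] mx_def[symmetric] by argo
qed

lemma kappa_alpha_ge_triangle_bridge:
  assumes sg: "simple_graph E" and deg: "degree E x \<le> 4" "degree E y \<le> 4"
    and xy: "E x y" and "E x z" "E y z" "E x w" "E y u"
    and "w \<noteq> y" "w \<noteq> z" "u \<noteq> x" "u \<noteq> z" and "w = u \<or> E w u"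
    and \<alpha>: "1/2 \<le> \<alpha>" "\<alpha> < 1"
  shows "(1 - \<alpha>) / 4 \<le> kappa_alpha E \<alpha> x y"
proof -
  have neighbour_mass: "(1 - \<alpha>) / 4 \<le> (1 - \<alpha>) / degree E v" if "E v t" "degree E v \<le> 4" for v t
    using degree_pos[OF sg that(1)] that(2) \<alpha> by (intro divide_left_mono) auto
  have "transport_dist E (mu E \<alpha> x) (mu E \<alpha> y) \<le> 1 - (1 - \<alpha>) / 4"
    using transport_dist_mu_triangle_bridge[OF sg xy assms(5-)]
      neighbour_mass[OF xy deg(1)] neighbour_mass[OF \<open>E y z\<close> deg(2)] by argo
  moreover have "gdist E x y = 1"
    using gdist_edge[where E=E, OF xy] simple_graph_irrefl[OF sg] xy by blast
  ultimately show ?thesis by (simp add: kappa_alpha_def) argo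
qed

lemma not_ricci_flat_if_curvature_lower_bound:
  assumes "E x y" and "0 < c"
    and "\<forall>\<^sub>F \<alpha> in at_left 1. c \<le> kappa_alpha E \<alpha> x y / (1 - \<alpha>)"
  shows "\<not> ricci_flat E"
proof
  assume "ricci_flat E"
  then have "((\<lambda>\<alpha>. kappa_alpha E \<alpha> x y / (1 - \<alpha>)) \<longlongrightarrow> 0) (at_left 1)"
    using assms(1) unfolding ricci_flat_def by blast
  then have "c \<le> 0"
    using assms(3) by (rule tendsto_lowerbound) simp
  then show False using assms(2) by simp
qed

lemma not_ricci_flat_triangle_bridge:
  assumes sg: "simple_graph E" and deg: "degree E x \<le> 4" "degree E y \<le> 4"
    and xy: "E x y" and "E x z" "E y z" "E x w" "E y u"
    and "w \<noteq> y" "w \<noteq> z" "u \<noteq> x" "u \<noteq> z" and "w = u \<or> E w u"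
  shows "\<not> ricci_flat E"
proof (rule not_ricci_flat_if_curvature_lower_bound[where E=E and c="1/4", OF xy])
  have "\<forall>\<^sub>F \<alpha> in at_left (1::real). \<alpha> \<in> {1/2<..<1}"
    by (rule eventually_at_left_real) simp
  then show "\<forall>\<^sub>F \<alpha> in at_left 1. 1/4 \<le> kappa_alpha E \<alpha> x y / (1 - \<alpha>)"
    by (rule eventually_mono)
      (use kappa_alpha_ge_triangle_bridge[OF assms] in \<open>auto simp: pos_le_divide_eq\<close>)
qed simp

lemma edge_in_cycle_3_common_neighbour:
  assumes sg: "simple_graph E" and "edge_in_cycle E 3 x y"
  obtains z where "E x z" "E y z"
proof -
  note sym = simple_graph_sym[OF sg]
  obtain vs i where len: "length vs = 3" and "distinct vs"
    and cyc: "\<forall>i<3. E (vs ! i) (vs ! ((i + 1) mod 3))"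
    and "i < 3" and xy: "{vs ! i, vs ! ((i + 1) mod 3)} = {x, y}"
    using assms(2) unfolding edge_in_cycle_def by auto
  obtain v0 v1 v2 where vs: "vs = [v0, v1, v2]"
    using len by (auto simp: length_Suc_conv numeral_3_eq_3)
  have "E v0 v1" "E v1 v2" "E v2 v0"
    using cyc[rule_format, of 0] cyc[rule_format, of 1] cyc[rule_format, of 2] by (auto simp: vs)
  moreover have "i = 0 \<or> i = 1 \<or> i = 2" using \<open>i < 3\<close> by auto
  ultimately show ?thesis
    using that xy \<open>distinct vs\<close> sym unfolding vs by (auto simp: doubleton_eq_iff; blast)
qed

lemma edge_in_cycle_4_path:
  assumes sg: "simple_graph E" and "edge_in_cycle E 4 x y"
  obtains u w where "E y u" "E u w" "E w x" "distinct [x, y, u, w]"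
proof -
  note sym = simple_graph_sym[OF sg]
  obtain vs i where len: "length vs = 4" and "distinct vs"
    and cyc: "\<forall>i<4. E (vs ! i) (vs ! ((i + 1) mod 4))"
    and "i < 4" and xy: "{vs ! i, vs ! ((i + 1) mod 4)} = {x, y}"
    using assms(2) unfolding edge_in_cycle_def by auto
  obtain v0 v1 v2 v3 where vs: "vs = [v0, v1, v2, v3]"
    using len by (auto simp: length_Suc_conv numeral_eq_Suc)
  have "E v0 v1" "E v1 v2" "E v2 v3" "E v3 v0"
    using cyc[rule_format, of 0] cyc[rule_format, of 1] cyc[rule_format, of 2]
      cyc[rule_format, of 3] by (auto simp: vs)
  moreover have "i = 0 \<or> i = 1 \<or> i = 2 \<or> i = 3" using \<open>i < 4\<close> by auto
  ultimately show ?thesis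
    using that xy \<open>distinct vs\<close> sym unfolding vs by (auto simp: doubleton_eq_iff; blast)
qed

theorem lemma6:
  fixes E :: "'a \<Rightarrow> 'a \<Rightarrow> bool"
  assumes "simple_graph E"
    and "ricci_flat E"
    and "\<forall>v. degree E v \<le> 4"
    and "E x y"
  shows "\<not> (edge_in_cycle E 3 x y \<and> edge_in_cycle E 4 x y)"
proof
  note sg = assms(1) and deg = assms(3)[rule_format] and sym = simple_graph_sym[OF assms(1)]
  assume "edge_in_cycle E 3 x y \<and> edge_in_cycle E 4 x y"
  then obtain z u w where xz: "E x z" and yz: "E y z"
    and yu: "E y u" and uw: "E u w" and wx: "E w x" and "distinct [x, y, u, w]"
    using edge_in_cycle_3_common_neighbour[OF sg] edge_in_cycle_4_path[OF sg] by metis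
  consider "z = w" | "z = u" | "z \<noteq> u" "z \<noteq> w" by blast
  then have "\<not> ricci_flat E"
  proof cases
    case 1
    then show ?thesis
      using not_ricci_flat_triangle_bridge[OF sg deg deg, of y w x u u] \<open>distinct [x, y, u, w]\<close>
        yz xz yu uw sym \<open>E x y\<close> by auto
  next
    case 2
    then show ?thesis
      using not_ricci_flat_triangle_bridge[OF sg deg deg, of x u y w w] \<open>distinct [x, y, u, w]\<close>
        xz yz uw wx sym \<open>E x y\<close> by auto
  next
    case 3
    then show ?thesis
      using not_ricci_flat_triangle_bridge[OF sg deg deg \<open>E x y\<close> xz yz sym[OF wx] yu]
        \<open>distinct [x, y, u, w]\<close> uw sym by auto
  qed
  then show False using assms(2) by contradiction
qed

end
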